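(* Let $Q_S=(X_0,Y_0,G,\mathcal{S})$ be a surrogate outcome query with graph $G=(V,E)$ and let $Q_T$ be its query transformation with collection of transportability diagrams $\mathcal{D}$; let $T$ be the set of all transportability nodes. If $X,Y\subseteq V$ are sets containing no transportability nodes and $(Y\perp X\mid Z)_{D_i}$ holds in some $D_i\in\mathcal{D}$, then $(Y\perp X\mid Z\setminus T)_G$ holds. Conversely, every conditional independence (d-separation) statement that holds in $G$ holds in every diagram of $\mathcal{D}$.
   Context: A (semi-Markovian) graph $G=(V,E)$ has acyclic directed edges and bidirected edges. d-separation $(Y\perp X\mid Z)$: every path between $X$ and $Y$ contains a non-collider in $Z$ or a collider $M$ (both adjacent path edges have arrowheads into $M$) with $\mathrm{De}(M)\cap Z=\emptyset$, where $\mathrm{De}(M)$ includes $M$. $\mathrm{An},\mathrm{De}$ include the set itself; $G[\overline{Z}]$ removes edges into $Z$; c-components are maximal sets connected by bidirected paths. Surrogate outcome query: $(X_0,Y_0,G,\mathcal{S})$ with $X_0,Y_0\subset V$ disjoint and $\mathcal{S}=\{(Z_i,W_i)\}_{i=1}^n$ satisfying $W_i\subset\mathrm{De}(Z_i)_G\setminus Z_i$, $Z_i\subset\mathrm{An}(W_i)_G\setminus W_i$, $\mathrm{De}(W_i)_G\cap Z_i=\emptyset$, $\mathrm{An}(W_{ij})_G\setminus W_i=\mathrm{An}(W_i)_G\setminus W_i$ for each $W_{ij}\in W_i$. Its query transformation has diagrams $D^{(1)},\dots,D^{(n)}$, where $D^{(i)}$ is $G$ plus a new node $T^{(i)}_j$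 with a single edge $T^{(i)}_j\to V_j$ for each $V_j\in(\mathrm{De}(Z_i)_G\setminus W_i)\cup(C_{W_i}\setminus\mathrm{An}(W_i)_{G[\overline{Z_i}]})$, $C_{W_i}$ being the union of vertex sets of c-components of $G$ meeting $W_i$. *)

theory Defs
  imports Main
begin

text \<open>A graph has a vertex set, directed edges (u,w) meaning u -> w, and
bidirected edges (u,w) meaning u <-> w (stored symmetrically).\<close>

record 'v graph =
  verts  :: "'v set"
  dedges :: "('v \<times> 'v) set"
  bedges :: "('v \<times> 'v) set"

definition wf_graph :: "'v graph \<Rightarrow> bool" where
  "wf_graph G \<longleftrightarrow> finite (verts G)
     \<and> dedges G \<subseteq> verts G \<times> verts G
     \<and> bedges G \<subseteq> verts G \<times> verts G
     \<and> sym (bedges G) \<and> (\<forall>v. (v, v) \<notin> bedges G)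
     \<and> acyclic (dedges G)"

definition De :: "'v graph \<Rightarrow> 'v set \<Rightarrow> 'v set" where
  "De G A = {w \<in> verts G. \<exists>a\<in>A. (a, w) \<in> (dedges G)\<^sup>*}"

definition An :: "'v graph \<Rightarrow> 'v set \<Rightarrow> 'v set" where
  "An G A = {w \<in> verts G. \<exists>a\<in>A. (w, a) \<in> (dedges G)\<^sup>*}"

text \<open>G[overline Z]: remove all edges with an arrowhead into Z.\<close>

definition remove_into :: "'v graph \<Rightarrow> 'v set \<Rightarrow> 'v graph" where
  "remove_into G Z = G\<lparr> dedges := {(u, w) \<in> dedges G. w \<notin> Z},
                        bedges := {(u, w) \<in> bedges G. u \<notin> Z \<and> w \<notin> Z} \<rparr>"

definition ccomp :: "'v graph \<Rightarrow> 'v \<Rightarrow> 'v set" where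
  "ccomp G v = {u \<in> verts G. (v, u) \<in> (bedges G)\<^sup>*}"

definition c_components :: "'v graph \<Rightarrow> 'v set set" where
  "c_components G = ccomp G ` verts G"

definition C_set :: "'v graph \<Rightarrow> 'v set \<Rightarrow> 'v set" where
  "C_set G W = \<Union>{C \<in> c_components G. C \<inter> W \<noteq> {}}"

text \<open>A path is a start vertex and a list of steps (edge kind, next vertex).
Fwd: u -> w, Bwd: u <- w, Bid: u <-> w (u current, w next vertex).\<close>

datatype ekind = Fwd | Bwd | Bid

definition path_nodes :: "'v \<Rightarrow> (ekind \<times> 'v) list \<Rightarrow> 'v list" where
  "path_nodes s ps = s # map snd ps"

definition edge_ok :: "'v graph \<Rightarrow> 'v \<Rightarrow> ekind \<times> 'v \<Rightarrow> bool" where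
  "edge_ok G u e = (case e of
      (Fwd, w) \<Rightarrow> (u, w) \<in> dedges G
    | (Bwd, w) \<Rightarrow> (w, u) \<in> dedges G
    | (Bid, w) \<Rightarrow> (u, w) \<in> bedges G)"

definition is_path :: "'v graph \<Rightarrow> 'v \<Rightarrow> (ekind \<times> 'v) list \<Rightarrow> bool" where
  "is_path G s ps \<longleftrightarrow> s \<in> verts G \<and> distinct (path_nodes s ps)
     \<and> (\<forall>k < length ps. edge_ok G (path_nodes s ps ! k) (ps ! k))"

text \<open>The intermediate node with index k (0 < k < length ps) is a collider iff both
adjacent path edges have arrowheads into it.\<close>

definition collider_at :: "(ekind \<times> 'v) list \<Rightarrow> nat \<Rightarrow> bool" where
  "collider_at ps k \<longleftrightarrow> fst (ps ! (k - 1)) \<in> {Fwd, Bid} \<and> fst (ps ! k) \<in> {Bwd, Bid}"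

definition blocked :: "'v graph \<Rightarrow> 'v set \<Rightarrow> 'v \<Rightarrow> (ekind \<times> 'v) list \<Rightarrow> bool" where
  "blocked G Z s ps \<longleftrightarrow> (\<exists>k. 0 < k \<and> k < length ps \<and>
      ((\<not> collider_at ps k \<and> path_nodes s ps ! k \<in> Z) \<or>
       (collider_at ps k \<and> De G {path_nodes s ps ! k} \<inter> Z = {})))"

text \<open>dsep G X Y Z is (Y \<perp> X | Z)_G.\<close>

definition dsep :: "'v graph \<Rightarrow> 'v set \<Rightarrow> 'v set \<Rightarrow> 'v set \<Rightarrow> bool" where
  "dsep G X Y Z \<longleftrightarrow> (\<forall>s ps. is_path G s ps \<and> s \<in> X \<and> last (path_nodes s ps) \<in> Y
        \<longrightarrow> blocked G Z s ps)"

text \<open>S is the list [(Z_1,W_1),...,(Z_n,W_n)] (0-based indexing).\<close>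

definition surrogate_query ::
  "'v set \<Rightarrow> 'v set \<Rightarrow> 'v graph \<Rightarrow> ('v set \<times> 'v set) list \<Rightarrow> bool" where
  "surrogate_query X0 Y0 G S \<longleftrightarrow> wf_graph G
     \<and> X0 \<subseteq> verts G \<and> Y0 \<subseteq> verts G \<and> X0 \<inter> Y0 = {}
     \<and> (\<forall>(Zi, Wi) \<in> set S.
          Zi \<subseteq> verts G \<and> Wi \<subseteq> verts G
        \<and> Wi \<subseteq> De G Zi - Zi
        \<and> Zi \<subseteq> An G Wi - Wi
        \<and> De G Wi \<inter> Zi = {}
        \<and> (\<forall>w \<in> Wi. An G {w} - Wi = An G Wi - Wi))"

text \<open>Vertices V_j receiving a transportability node T^(i)_j in D^(i).\<close>

definition t_targets :: "'v graph \<Rightarrow> 'v set \<Rightarrow> 'v set \<Rightarrow> 'v set" where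
  "t_targets G Zi Wi = (De G Zi - Wi) \<union> (C_set G Wi - An (remove_into G Zi) Wi)"

text \<open>Diagram D^(i): original vertices are Inl v, the node T^(i)_j is Inr (i, V_j).\<close>

definition diagram ::
  "'v graph \<Rightarrow> ('v set \<times> 'v set) list \<Rightarrow> nat \<Rightarrow> ('v + nat \<times> 'v) graph" where
  "diagram G S i = (let tt = t_targets G (fst (S ! i)) (snd (S ! i)) in
     \<lparr> verts = Inl ` verts G \<union> Inr ` ({i} \<times> tt),
       dedges = map_prod Inl Inl ` dedges G \<union> {(Inr (i, v), Inl v) | v. v \<in> tt},
       bedges = map_prod Inl Inl ` bedges G \<rparr>)"

definition transport_nodes ::
  "'v graph \<Rightarrow> ('v set \<times> 'v set) list \<Rightarrow> ('v + nat \<times> 'v) set" where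
  "transport_nodes G S = (\<Union>i < length S. verts (diagram G S i) - Inl ` verts G)"

end

theory Submission
  imports Defs
begin

text \<open>A transportability node T is a fresh source whose only edge is T \<rightarrow> V for a single
original vertex V. It is therefore never an endpoint of a path between original vertices, and
never an interior node either: both of its path neighbours would have to be V, contradicting
that paths are simple. Hence the paths of a diagram between original vertices are exactly the
paths of G, with the same colliders, and since T is not a descendant of anything, descendants
of original vertices are also unchanged. So d-separation between original vertices in a diagram
is d-separation in G given the original vertices of the conditioning set. Only this shape of
the diagrams matters.\<close>

lemma path_nodes_map_apsnd: "path_nodes (f s) (map (apsnd f) ps) = map f (path_nodes s ps)"
  by (simp add: path_nodes_def)

lemma collider_at_map_apsnd:
  "k < length ps \<Longrightarrow> collider_at (map (apsnd f) ps) k \<longleftrightarrow> collider_at ps k"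
  by (simp add: collider_at_def)

lemma last_path_nodes_map_apsnd:
  "last (path_nodes (f s) (map (apsnd f) ps)) = f (last (path_nodes s ps))"
  by (simp add: path_nodes_map_apsnd last_map path_nodes_def)

definition attach_sources :: "'v graph \<Rightarrow> ('t \<Rightarrow> 'v) \<Rightarrow> 't set \<Rightarrow> ('v + 't) graph" where
  "attach_sources G f T =
     \<lparr> verts = Inl ` verts G \<union> Inr ` T,
       dedges = map_prod Inl Inl ` dedges G \<union> {(Inr t, Inl (f t)) | t. t \<in> T},
       bedges = map_prod Inl Inl ` bedges G \<rparr>"

lemma diagram_eq_attach_sources:
  "diagram G S i = attach_sources G snd ({i} \<times> t_targets G (fst (S ! i)) (snd (S ! i)))"
  unfolding diagram_def attach_sources_def Let_def by auto

context
  fixes G :: "'v graph" and f :: "'t \<Rightarrow> 'v" and T :: "'t set"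
begin

lemma Inl_in_verts_attach_sources [simp]:
  "Inl v \<in> verts (attach_sources G f T) \<longleftrightarrow> v \<in> verts G"
  by (auto simp: attach_sources_def)

lemma dedges_attach_sources_Inl [simp]:
  "(Inl a, w) \<in> dedges (attach_sources G f T) \<longleftrightarrow> (\<exists>b. w = Inl b \<and> (a, b) \<in> dedges G)"
  by (auto simp: attach_sources_def)

lemma dedges_attach_sources_Inr:
  "(Inr t, w) \<in> dedges (attach_sources G f T) \<Longrightarrow> w = Inl (f t)"
  "(w, Inr t) \<notin> dedges (attach_sources G f T)"
  by (auto simp: attach_sources_def)

lemma bedges_attach_sources [simp]:
  "(Inl a, Inl b) \<in> bedges (attach_sources G f T) \<longleftrightarrow> (a, b) \<in> bedges G"
  "(Inr t, w) \<notin> bedges (attach_sources G f T)"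
  "(w, Inr t) \<notin> bedges (attach_sources G f T)"
  by (auto simp: attach_sources_def)

lemma edge_ok_attach_sources_Inl [simp]:
  "edge_ok (attach_sources G f T) (Inl u) (e, Inl w) \<longleftrightarrow> edge_ok G u (e, w)"
  by (cases e) (auto simp: edge_ok_def)

lemma edge_ok_attach_sources_Inr:
  "edge_ok (attach_sources G f T) (Inr t) (e, w) \<Longrightarrow> w = Inl (f t)"
  "edge_ok (attach_sources G f T) u (e, Inr t) \<Longrightarrow> u = Inl (f t)"
  by (auto simp: edge_ok_def dedges_attach_sources_Inr(2) dest: dedges_attach_sources_Inr(1)
      split: ekind.splits)

lemma De_attach_sources_Inl: "De (attach_sources G f T) {Inl v} = Inl ` De G {v}"
proof -
  have lower: "\<exists>u. w = Inl u \<and> (v, u) \<in> (dedges G)\<^sup>*"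
    if "(Inl v, w) \<in> (dedges (attach_sources G f T))\<^sup>*" for w
    using that by (induction rule: rtrancl_induct) (auto intro: rtrancl_into_rtrancl)
  have lift: "(Inl v, Inl u) \<in> (dedges (attach_sources G f T))\<^sup>*"
    if "(v, u) \<in> (dedges G)\<^sup>*" for u
    using that by (induction rule: rtrancl_induct) (auto intro: rtrancl_into_rtrancl)
  show ?thesis
    unfolding De_def by (auto dest: lower intro: lift)
qed

lemma is_path_attach_sources_lift_iff:
  "is_path (attach_sources G f T) (Inl s) (map (apsnd Inl) ps) \<longleftrightarrow> is_path G s ps"
proof -
  have "edge_ok (attach_sources G f T) (path_nodes (Inl s) (map (apsnd Inl) ps) ! k)
          (map (apsnd Inl) ps ! k) \<longleftrightarrow> edge_ok G (path_nodes s ps ! k) (ps ! k)"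
    if "k < length ps" for k
    using that by (simp add: path_nodes_map_apsnd[of Inl] path_nodes_def
        nth_Cons' apsnd_def map_prod_def split: prod.splits)
  then show ?thesis
    unfolding is_path_def
    by (auto simp: path_nodes_map_apsnd[of Inl] distinct_map)
qed

lemma blocked_attach_sources_lift_iff:
  "blocked (attach_sources G f T) Z (Inl s) (map (apsnd Inl) ps) \<longleftrightarrow> blocked G (Inl -` Z) s ps"
proof -
  have node: "path_nodes (Inl s) (map (apsnd Inl) ps) ! k = Inl (path_nodes s ps ! k)"
    if "k < length ps" for k
    using that by (simp add: path_nodes_map_apsnd[of Inl] path_nodes_def nth_Cons')
  have disjoint: "Inl ` D \<inter> Z = {} \<longleftrightarrow> D \<inter> Inl -` Z = {}" for D :: "'v set"
    by auto
  show ?thesis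
    unfolding blocked_def
    by (intro ex_cong1)
      (simp add: node disjoint collider_at_map_apsnd De_attach_sources_Inl cong: conj_cong)
qed

lemma is_path_attach_sources_nodes_Inl:
  assumes path: "is_path (attach_sources G f T) (Inl s) ps"
    and ends_Inl: "isl (last (path_nodes (Inl s) ps))"
    and j: "j \<le> length ps"
  shows "isl (path_nodes (Inl s) ps ! j)"
proof (rule ccontr)
  let ?n = "path_nodes (Inl s) ps"
  assume "\<not> isl (?n ! j)"
  then obtain t where t: "?n ! j = Inr t" by (cases "?n ! j") auto
  have "j \<noteq> 0" using t by (cases j) (auto simp: path_nodes_def)
  moreover have "last ?n = ?n ! length ps"
    by (simp add: path_nodes_def last_conv_nth)
  then have "j \<noteq> length ps"
    using ends_Inl t by auto
  ultimately have inner: "0 < j" "j < length ps" using j by auto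
  have step: "edge_ok (attach_sources G f T) (?n ! k) (fst (ps ! k), ?n ! Suc k)"
    if "k < length ps" for k
    using path that by (simp add: is_path_def path_nodes_def)
  have "edge_ok (attach_sources G f T) (?n ! (j - 1)) (fst (ps ! (j - 1)), Inr t)"
    using step[of "j - 1"] inner t by simp
  then have "?n ! (j - 1) = Inl (f t)"
    by (rule edge_ok_attach_sources_Inr(2))
  moreover have "edge_ok (attach_sources G f T) (Inr t) (fst (ps ! j), ?n ! Suc j)"
    using step[of j] inner t by simp
  then have "?n ! Suc j = Inl (f t)"
    by (rule edge_ok_attach_sources_Inr(1))
  moreover have "distinct ?n" "length ?n = Suc (length ps)"
    using path by (simp_all add: is_path_def path_nodes_def)
  ultimately have "j - 1 = Suc j"
    using inner nth_eq_iff_index_eq[of ?n "j - 1" "Suc j"] by auto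
  then show False
    by simp
qed

lemma is_path_attach_sources_liftE:
  assumes path: "is_path (attach_sources G f T) (Inl s) ps"
    and ends_Inl: "isl (last (path_nodes (Inl s) ps))"
  obtains ps\<^sub>0 where "ps = map (apsnd Inl) ps\<^sub>0"
proof
  have "apsnd Inl (apsnd projl x) = x" if "x \<in> set ps" for x
  proof -
    obtain k where k: "k < length ps" "x = ps ! k"
      using \<open>x \<in> set ps\<close> by (auto simp: in_set_conv_nth)
    then have "isl (path_nodes (Inl s) ps ! Suc k)"
      using is_path_attach_sources_nodes_Inl[OF path ends_Inl] by simp
    with k show ?thesis
      by (cases "ps ! k") (auto simp: path_nodes_def)
  qed
  then have "map (apsnd Inl \<circ> apsnd projl) ps = ps"
    by (intro map_idI) simp
  then show "ps = map (apsnd Inl) (map (apsnd projl) ps)"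
    by simp
qed

lemma dsep_attach_sources_iff:
  "dsep (attach_sources G f T) (Inl ` X) (Inl ` Y) Z \<longleftrightarrow> dsep G X Y (Inl -` Z)"
proof
  assume sep: "dsep (attach_sources G f T) (Inl ` X) (Inl ` Y) Z"
  show "dsep G X Y (Inl -` Z)"
    unfolding dsep_def
  proof (intro allI impI)
    fix s ps
    assume "is_path G s ps \<and> s \<in> X \<and> last (path_nodes s ps) \<in> Y"
    then have "blocked (attach_sources G f T) Z (Inl s) (map (apsnd Inl) ps)"
      using sep unfolding dsep_def
      by (simp add: is_path_attach_sources_lift_iff last_path_nodes_map_apsnd[of Inl])
    then show "blocked G (Inl -` Z) s ps"
      by (simp add: blocked_attach_sources_lift_iff)
  qed
next
  assume sep: "dsep G X Y (Inl -` Z)"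
  show "dsep (attach_sources G f T) (Inl ` X) (Inl ` Y) Z"
    unfolding dsep_def
  proof (intro allI impI)
    fix s' ps
    assume path: "is_path (attach_sources G f T) s' ps \<and> s' \<in> Inl ` X
      \<and> last (path_nodes s' ps) \<in> Inl ` Y"
    then obtain s where s: "s' = Inl s" "s \<in> X"
      by auto
    with path obtain ps\<^sub>0 where ps: "ps = map (apsnd Inl) ps\<^sub>0"
      by (auto elim: is_path_attach_sources_liftE)
    have "blocked G (Inl -` Z) s ps\<^sub>0"
      using sep path unfolding dsep_def s ps
      by (auto simp: is_path_attach_sources_lift_iff last_path_nodes_map_apsnd[of Inl])
    then show "blocked (attach_sources G f T) Z s' ps"
      by (simp add: s ps blocked_attach_sources_lift_iff)
  qed
qed

end

lemma Inl_notin_transport_nodes: "Inl v \<notin> transport_nodes G S"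
  by (auto simp: transport_nodes_def diagram_def Let_def)

theorem corollary1:
  fixes G :: "'v graph" and X0 Y0 :: "'v set" and S :: "('v set \<times> 'v set) list"
  assumes "surrogate_query X0 Y0 G S"
  shows "(\<forall>i X Y Z. i < length S \<and> X \<subseteq> verts G \<and> Y \<subseteq> verts G
             \<and> Z \<subseteq> verts (diagram G S i)
             \<and> dsep (diagram G S i) (Inl ` X) (Inl ` Y) Z
           \<longrightarrow> dsep G X Y (Inl -` (Z - transport_nodes G S)))
       \<and> (\<forall>X Y Z. X \<subseteq> verts G \<and> Y \<subseteq> verts G \<and> Z \<subseteq> verts G \<and> dsep G X Y Z
           \<longrightarrow> (\<forall>i < length S. dsep (diagram G S i) (Inl ` X) (Inl ` Y) (Inl ` Z)))"
proof (intro conjI allI impI)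
  fix i X Y Z
  assume "i < length S \<and> X \<subseteq> verts G \<and> Y \<subseteq> verts G
             \<and> Z \<subseteq> verts (diagram G S i) \<and> dsep (diagram G S i) (Inl ` X) (Inl ` Y) Z"
  then have "dsep G X Y (Inl -` Z)"
    by (simp add: diagram_eq_attach_sources dsep_attach_sources_iff)
  moreover have "Inl -` (Z - transport_nodes G S) = Inl -` Z"
    by (auto simp: Inl_notin_transport_nodes)
  ultimately show "dsep G X Y (Inl -` (Z - transport_nodes G S))"
    by simp
next
  fix X Y Z i
  assume "X \<subseteq> verts G \<and> Y \<subseteq> verts G \<and> Z \<subseteq> verts G \<and> dsep G X Y Z"
  then show "dsep (diagram G S i) (Inl ` X) (Inl ` Y) (Inl ` Z)"
    by (simp add: diagram_eq_attach_sources dsep_attach_sources_iff inj_vimage_image_eq)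
qed

end
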